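(* Let $\Omega$ be a transitive state space (normalized so that its maximally mixed state $\omega_M$ satisfies $(\omega_M,\omega_M)_E=1$). Then the vector $\hat u\in V$ representing the unit effect $u$ via the inner product $\langle\cdot,\cdot\rangle_{GL(\Omega)}$ (i.e. $u(x)=\langle\hat u,x\rangle_{GL(\Omega)}$ for all $x\in V$; $\hat u$ lies in the internal dual cone $V^{*int}_{+}$) is equal to $\omega_M$.
   Context: $V=\mathbb R^{N+1}$ with Euclidean inner product $(\cdot,\cdot)_E$. A state space $\Omega\subset V$ is a compact convex set with $\mathrm{span}(\Omega)=V$ and $0\notin\mathrm{aff}(\Omega)$; $V_+=\{\lambda\omega:\lambda\ge0,\omega\in\Omega\}$; the unit effect $u\in V^*$ is the linear functional with $u(\omega)=1$ for all $\omega\in\Omega$. $GL(\Omega)$ is the compact group of linear bijections $T:V\to V$ with $T(\Omega)=\Omega$, $\mu$ its normalized Haar measure, and $\langle x,y\rangle_{GL(\Omega)}=\int_{GL(\Omega)}(Tx,Ty)_E\,d\mu(T)$. $\Omega$ is transitive if $GL(\Omega)$ acts transitively on the extreme points of $\Omega$; in that case there is a unique state $\omega_M\in\Omega$ (maximally mixed state) with $T\omega_M=\omega_M$ for all $T\in GL(\Omega)$, and by convention $\Omega$ is rescaled so that $(\omega_M,\omega_M)_E=1$. $V^{*int}_+=\{y\in V:\langle x,y\rangle_{GL(\Omega)}\ge0\ \forall x\in V_+\}$. *)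

theory Defs
  imports "HOL-Analysis.Analysis" "HOL-Probability.Probability"
begin

text \<open>V = R^{N+1} is modelled as real^'n for a finite index type 'n; the Euclidean
inner product is the standard inner product.  Linear maps V -> V are matrices.\<close>

definition state_space :: "(real^'n) set \<Rightarrow> bool" where
  "state_space \<Omega> \<longleftrightarrow> compact \<Omega> \<and> convex \<Omega> \<and> span \<Omega> = UNIV \<and> 0 \<notin> affine hull \<Omega>"

definition GL_Omega :: "(real^'n) set \<Rightarrow> (real^'n^'n) set" where
  "GL_Omega \<Omega> = {T. invertible T \<and> (\<lambda>x. T *v x) ` \<Omega> = \<Omega>}"

definition transitive_state_space :: "(real^'n) set \<Rightarrow> bool" where
  "transitive_state_space \<Omega> \<longleftrightarrow> state_space \<Omega> \<and>
     (\<forall>x y. x extreme_point_of \<Omega> \<longrightarrow> y extreme_point_of \<Omega> \<longrightarrow>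
        (\<exists>T\<in>GL_Omega \<Omega>. T *v x = y))"

definition haar_GL :: "(real^'n) set \<Rightarrow> (real^'n^'n) measure \<Rightarrow> bool" where
  "haar_GL \<Omega> \<mu> \<longleftrightarrow> sets \<mu> = sets borel \<and> prob_space \<mu> \<and> emeasure \<mu> (GL_Omega \<Omega>) = 1 \<and>
     (\<forall>S\<in>GL_Omega \<Omega>. distr \<mu> \<mu> (\<lambda>T. S ** T) = \<mu> \<and> distr \<mu> \<mu> (\<lambda>T. T ** S) = \<mu>)"

definition inner_GL :: "(real^'n^'n) measure \<Rightarrow> real^'n \<Rightarrow> real^'n \<Rightarrow> real" where
  "inner_GL \<mu> x y = (\<integral>T. (T *v x) \<bullet> (T *v y) \<partial>\<mu>)"

end

theory Submission
  imports Defs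
begin

text \<open>Since \<open>\<omega>M\<close> is fixed by GL(\<Omega>) and the averaged inner product is GL(\<Omega>)-invariant,
the functional \<open>inner_GL \<mu> \<omega>M\<close> takes the same value at all extreme points, which GL(\<Omega>)
permutes transitively. By Krein-Milman the extreme points span V, so this functional is a multiple
of u, and evaluating at \<open>\<omega>M\<close> shows that the factor is \<open>inner_GL \<mu> \<omega>M \<omega>M = \<omega>M \<bullet> \<omega>M = 1\<close>.
Hence \<open>\<omega>M\<close> and \<open>u_hat\<close> represent the same functional, and they coincide because the averaged
inner product is positive definite: almost every T is invertible.\<close>

lemma continuous_on_matrix_vector_mult_left:
  "continuous_on UNIV (\<lambda>T::real^'n^'m. T *v x)"
  unfolding matrix_vector_mult_def by (intro continuous_on_vec_lambda continuous_intros)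

lemma continuous_on_matrix_mult_left:
  "continuous_on UNIV (\<lambda>T::real^'n^'m. T ** S)"
  unfolding matrix_matrix_mult_def by (intro continuous_on_vec_lambda continuous_intros)

lemma borel_measurable_inner_matrix_vector_mult:
  "(\<lambda>T::real^'n^'n. (T *v x) \<bullet> (T *v y)) \<in> borel_measurable borel"
  by (intro borel_measurable_continuous_onI continuous_intros continuous_on_matrix_vector_mult_left)

lemma GL_Omega_orbit_bounded:
  fixes \<Omega> :: "(real^'n) set"
  assumes "state_space \<Omega>"
  shows "\<exists>K. \<forall>T\<in>GL_Omega \<Omega>. norm (T *v x) \<le> K"
proof -
  have "bounded \<Omega>" using assms compact_imp_bounded unfolding state_space_def by blast
  then obtain R where R: "\<And>w. w \<in> \<Omega> \<Longrightarrow> norm w \<le> R" by (meson bounded_iff)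
  have "x \<in> span \<Omega>" using assms unfolding state_space_def by simp
  then obtain t r where t: "finite t" "t \<subseteq> \<Omega>" and x: "x = (\<Sum>a\<in>t. r a *\<^sub>R a)"
    unfolding span_explicit by blast
  have "norm (T *v x) \<le> (\<Sum>a\<in>t. \<bar>r a\<bar> * R)" if T: "T \<in> GL_Omega \<Omega>" for T
  proof -
    have "T *v x = (\<Sum>a\<in>t. r a *\<^sub>R (T *v a))"
      unfolding x using t(1)
      by (induction t rule: finite_induct)
        (simp_all add: matrix_vector_right_distrib matrix_vector_mult_scaleR)
    also have "norm \<dots> \<le> (\<Sum>a\<in>t. norm (r a *\<^sub>R (T *v a)))" by (rule norm_sum)
    also have "\<dots> \<le> (\<Sum>a\<in>t. \<bar>r a\<bar> * R)"
    proof (rule sum_mono)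
      fix a assume "a \<in> t"
      then have "T *v a \<in> \<Omega>" using T t(2) unfolding GL_Omega_def by blast
      then show "norm (r a *\<^sub>R (T *v a)) \<le> \<bar>r a\<bar> * R"
        using R by (simp add: mult_left_mono)
    qed
    finally show ?thesis .
  qed
  then show ?thesis by blast
qed

lemma GL_Omega_mult_vector_eq_0D:
  assumes "T \<in> GL_Omega \<Omega>" and "T *v x = 0"
  shows "x = 0"
proof -
  obtain T' where "T' ** T = mat 1" using assms(1) unfolding GL_Omega_def invertible_def by blast
  then have "x = T' *v (T *v x)" by (simp add: matrix_vector_mul_assoc)
  with assms(2) show ?thesis by simp
qed

lemma haar_GL_prob_space: "haar_GL \<Omega> \<mu> \<Longrightarrow> prob_space \<mu>"
  unfolding haar_GL_def by blast

lemma haar_GL_sets: "haar_GL \<Omega> \<mu> \<Longrightarrow> sets \<mu> = sets borel"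
  unfolding haar_GL_def by blast

lemma haar_GL_borel_measurable:
  assumes "haar_GL \<Omega> \<mu>" and "f \<in> borel_measurable borel"
  shows "f \<in> borel_measurable \<mu>"
  using assms(2) measurable_cong_sets[OF haar_GL_sets[OF assms(1)] refl] by metis

lemma haar_GL_AE_GL_Omega:
  assumes "haar_GL \<Omega> \<mu>"
  shows "AE T in \<mu>. T \<in> GL_Omega \<Omega>"
proof -
  have GL1: "emeasure \<mu> (GL_Omega \<Omega>) = 1" using assms unfolding haar_GL_def by blast
  then have "GL_Omega \<Omega> \<in> sets \<mu>" using emeasure_neq_0_sets by force
  with GL1 show ?thesis
    using prob_space.AE_in_set_eq_1[OF haar_GL_prob_space[OF assms]] by (simp add: measure_def)
qed

lemma integrable_haar_GL_inner:
  assumes "state_space \<Omega>" and "haar_GL \<Omega> \<mu>"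
  shows "integrable \<mu> (\<lambda>T. (T *v x) \<bullet> (T *v y))"
proof -
  obtain Kx where Kx: "\<forall>T\<in>GL_Omega \<Omega>. norm (T *v x) \<le> Kx"
    using GL_Omega_orbit_bounded[OF assms(1)] by blast
  obtain Ky where Ky: "\<forall>T\<in>GL_Omega \<Omega>. norm (T *v y) \<le> Ky"
    using GL_Omega_orbit_bounded[OF assms(1)] by blast
  have "AE T in \<mu>. norm ((T *v x) \<bullet> (T *v y)) \<le> Kx * Ky"
    using haar_GL_AE_GL_Omega[OF assms(2)]
  proof eventually_elim
    case (elim T)
    have "norm ((T *v x) \<bullet> (T *v y)) \<le> norm (T *v x) * norm (T *v y)"
      using Cauchy_Schwarz_ineq2 by simp
    also have "\<dots> \<le> Kx * Ky"
      using Kx Ky elim by (intro mult_mono) (auto intro: order_trans[OF norm_ge_zero])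
    finally show ?case .
  qed
  then show ?thesis
    by (rule finite_measure.integrable_const_bound
        [OF prob_space.finite_measure[OF haar_GL_prob_space[OF assms(2)]] _
          haar_GL_borel_measurable[OF assms(2) borel_measurable_inner_matrix_vector_mult]])
qed

lemma inner_GL_GL_Omega_invariant:
  assumes "haar_GL \<Omega> \<mu>" and "S \<in> GL_Omega \<Omega>"
  shows "inner_GL \<mu> (S *v x) (S *v y) = inner_GL \<mu> x y"
proof -
  have distr: "distr \<mu> \<mu> (\<lambda>T. T ** S) = \<mu>"
    using assms unfolding haar_GL_def by blast
  have "(\<lambda>T. T ** S) \<in> measurable \<mu> \<mu>"
    using borel_measurable_continuous_onI[OF continuous_on_matrix_mult_left] measurable_cong_sets
      [OF haar_GL_sets[OF assms(1)] haar_GL_sets[OF assms(1)]] by simp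
  then have "integral\<^sup>L (distr \<mu> \<mu> (\<lambda>T. T ** S)) (\<lambda>T. (T *v x) \<bullet> (T *v y))
      = integral\<^sup>L \<mu> (\<lambda>T. ((T ** S) *v x) \<bullet> ((T ** S) *v y))"
    by (rule integral_distr[OF _ haar_GL_borel_measurable
          [OF assms(1) borel_measurable_inner_matrix_vector_mult]])
  then show ?thesis
    unfolding inner_GL_def distr by (simp add: matrix_vector_mul_assoc)
qed

lemma linear_inner_GL:
  assumes "state_space \<Omega>" and "haar_GL \<Omega> \<mu>"
  shows "linear (inner_GL \<mu> x)"
proof (rule linearI)
  fix a b
  show "inner_GL \<mu> x (a + b) = inner_GL \<mu> x a + inner_GL \<mu> x b"
    unfolding inner_GL_def
    by (simp add: matrix_vector_right_distrib inner_add_right integrable_haar_GL_inner[OF assms])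
next
  fix c a
  show "inner_GL \<mu> x (c *\<^sub>R a) = c *\<^sub>R inner_GL \<mu> x a"
    unfolding inner_GL_def by (simp add: matrix_vector_mult_scaleR)
qed

lemma inner_GL_diff_left:
  assumes "state_space \<Omega>" and "haar_GL \<Omega> \<mu>"
  shows "inner_GL \<mu> (a - b) y = inner_GL \<mu> a y - inner_GL \<mu> b y"
  unfolding inner_GL_def
  by (subst Bochner_Integration.integral_diff[symmetric,
        OF integrable_haar_GL_inner[OF assms] integrable_haar_GL_inner[OF assms]])
    (simp add: matrix_vector_mult_diff_distrib inner_diff_left)

lemma inner_GL_fixed_vector:
  assumes "haar_GL \<Omega> \<mu>" and "\<forall>T\<in>GL_Omega \<Omega>. T *v \<omega> = \<omega>"
  shows "inner_GL \<mu> \<omega> \<omega> = \<omega> \<bullet> \<omega>"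
proof -
  have "AE T in \<mu>. (T *v \<omega>) \<bullet> (T *v \<omega>) = \<omega> \<bullet> \<omega>"
    using haar_GL_AE_GL_Omega[OF assms(1)] by eventually_elim (simp add: assms(2))
  then have "inner_GL \<mu> \<omega> \<omega> = integral\<^sup>L \<mu> (\<lambda>T. \<omega> \<bullet> \<omega>)"
    unfolding inner_GL_def
    by (rule integral_cong_AE[OF haar_GL_borel_measurable
          [OF assms(1) borel_measurable_inner_matrix_vector_mult] borel_measurable_const])
  also have "\<dots> = \<omega> \<bullet> \<omega>"
    using prob_space.prob_space[OF haar_GL_prob_space[OF assms(1)]] by simp
  finally show ?thesis .
qed

lemma inner_GL_self_eq_0D:
  assumes "state_space \<Omega>" and "haar_GL \<Omega> \<mu>" and "inner_GL \<mu> x x = 0"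
  shows "x = 0"
proof -
  have "AE T in \<mu>. (T *v x) \<bullet> (T *v x) = 0"
    using assms(3) integral_nonneg_eq_0_iff_AE[OF integrable_haar_GL_inner[OF assms(1,2)]]
    unfolding inner_GL_def by simp
  then have "AE T in \<mu>. T \<in> GL_Omega \<Omega> \<and> T *v x = 0"
    using haar_GL_AE_GL_Omega[OF assms(2)] by eventually_elim simp
  then obtain T where "T \<in> GL_Omega \<Omega> \<and> T *v x = 0"
    using eventually_happens'[OF prob_space.ae_filter_bot[OF haar_GL_prob_space[OF assms(2)]]]
    by blast
  then show ?thesis using GL_Omega_mult_vector_eq_0D by blast
qed

lemma inner_GL_left_cancel:
  assumes "state_space \<Omega>" and "haar_GL \<Omega> \<mu>" and "\<forall>y. inner_GL \<mu> a y = inner_GL \<mu> b y"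
  shows "a = b"
proof -
  have "inner_GL \<mu> (a - b) (a - b) = 0"
    using assms(3) by (simp add: inner_GL_diff_left[OF assms(1,2)])
  then have "a - b = 0" by (rule inner_GL_self_eq_0D[OF assms(1,2)])
  then show ?thesis by simp
qed

lemma linear_const_on_extreme_points_imp_scaled:
  fixes \<Omega> :: "(real^'n) set" and g u :: "real^'n \<Rightarrow> real"
  assumes "state_space \<Omega>" and "linear g" and "linear u" and "\<forall>\<omega>\<in>\<Omega>. u \<omega> = 1"
    and "\<And>e. e extreme_point_of \<Omega> \<Longrightarrow> g e = c"
  shows "g x = c * u x"
proof -
  let ?E = "{e. e extreme_point_of \<Omega>}"
  have "linear (\<lambda>x. g x - c * u x)"
    using assms(2,3)
    by (intro linear_compose_sub linear_compose[of u "(*) c", unfolded o_def] linear_times)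
  moreover have "g e - c * u e = 0" if "e \<in> ?E" for e
    using that assms(4,5) extreme_point_of_def by auto
  moreover have "x \<in> span ?E"
  proof -
    have "\<Omega> = convex hull ?E"
      using assms(1) Krein_Milman_Minkowski unfolding state_space_def by blast
    then have "\<Omega> \<subseteq> span ?E" using convex_hull_subset_span by blast
    then have "span \<Omega> \<subseteq> span ?E" by (simp add: span_minimal)
    then show ?thesis using assms(1) unfolding state_space_def by auto
  qed
  ultimately have "g x - c * u x = 0" by (rule linear_eq_0_on_span)
  then show ?thesis by simp
qed

lemma inner_GL_fixed_vector_const_on_extreme_points:
  assumes "transitive_state_space \<Omega>" and "haar_GL \<Omega> \<mu>"
    and "\<forall>T\<in>GL_Omega \<Omega>. T *v \<omega> = \<omega>" and "e0 extreme_point_of \<Omega>" and "e extreme_point_of \<Omega>"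
  shows "inner_GL \<mu> \<omega> e = inner_GL \<mu> \<omega> e0"
proof -
  obtain T where T: "T \<in> GL_Omega \<Omega>" and "T *v e0 = e"
    using assms(1,4,5) unfolding transitive_state_space_def by blast
  then have "inner_GL \<mu> \<omega> e = inner_GL \<mu> (T *v \<omega>) (T *v e0)"
    using assms(3) by simp
  also have "\<dots> = inner_GL \<mu> \<omega> e0"
    by (rule inner_GL_GL_Omega_invariant[OF assms(2) T])
  finally show ?thesis .
qed

theorem lemma3p1:
  fixes \<Omega> :: "(real^'n) set" and u :: "real^'n \<Rightarrow> real" and \<omega>M u_hat :: "real^'n"
    and \<mu> :: "(real^'n^'n) measure"
  assumes "transitive_state_space \<Omega>"
    and "linear u" and "\<forall>\<omega>\<in>\<Omega>. u \<omega> = 1"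
    and "\<omega>M \<in> \<Omega>" and "\<forall>T\<in>GL_Omega \<Omega>. T *v \<omega>M = \<omega>M"
    and "\<omega>M \<bullet> \<omega>M = 1"
    and "haar_GL \<Omega> \<mu>"
    and "\<forall>x. u x = inner_GL \<mu> u_hat x"
  shows "u_hat = \<omega>M"
proof -
  have \<Omega>: "state_space \<Omega>" using assms(1) unfolding transitive_state_space_def by blast
  obtain e0 where "e0 extreme_point_of \<Omega>"
    using \<Omega> assms(4) Krein_Milman_Minkowski unfolding state_space_def by fastforce
  then have scaled_u: "inner_GL \<mu> \<omega>M x = inner_GL \<mu> \<omega>M e0 * u x" for x
    by (rule linear_const_on_extreme_points_imp_scaled
        [OF \<Omega> linear_inner_GL[OF \<Omega> assms(7)] assms(2,3)
          inner_GL_fixed_vector_const_on_extreme_points[OF assms(1,7,5)]])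
  have "inner_GL \<mu> \<omega>M \<omega>M = 1"
    using inner_GL_fixed_vector[OF assms(7,5)] assms(6) by simp
  then have "inner_GL \<mu> \<omega>M e0 = 1"
    using scaled_u[of \<omega>M] assms(3,4) by simp
  then have "inner_GL \<mu> u_hat x = inner_GL \<mu> \<omega>M x" for x
    using scaled_u[of x] assms(8) by simp
  then show ?thesis by (intro inner_GL_left_cancel[OF \<Omega> assms(7)] allI)
qed

end
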